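(* Let $\phi(x):=\max(0,x)$, $d\in\mathbb{N}$, $0<\lambda<1$, $0\le\epsilon<1$, $\epsilon_+:=1-\epsilon$, $\epsilon_-:=\lambda/2-\epsilon$. Define $r_1:=\epsilon_++\frac{\lambda^2}{3}(d-1)\epsilon_-$, $r_2:=\epsilon_-+\frac{\lambda^2}{3}\epsilon_++\frac{\lambda^2}{3}(d-2)\epsilon_-$, $r_3:=\epsilon_++\frac{\lambda}{2}(d-1)\epsilon_-$, $r_4:=\epsilon_-+\frac{\lambda}{2}\epsilon_++\frac{\lambda}{2}(d-2)\epsilon_-$, $r_5:=\frac{\lambda}{2}\epsilon_++\frac{\lambda}{2}\epsilon_-+\frac{\lambda^2}{4}(d-2)\epsilon_-$, $r_6:=\lambda\epsilon_-+\frac{\lambda^2}{4}\epsilon_++\frac{\lambda^2}{4}(d-3)\epsilon_-$, $r_7:=\epsilon_++(d-1)\epsilon_-$. For $d'\in\{0,\dots,d\}$ and $b\in\{0,1\}$ define $s_1:=br_7+r_3+(d'-1)r_4$, $s_2:=br_7+d'r_4$, $s_3:=br_3+r_1+(d'-1)r_5$, $s_4:=br_3+d'r_5$, $s_5:=br_4+r_2+r_5+(d'-2)r_6$, $s_6:=br_4+r_2+(d'-1)r_6$, $s_7:=br_4+r_5+(d'-1)r_6$, $s_8:=br_4+d'r_6$ (each a function of $(d',b)$), and $$\mathrm{score}(d',b):=d'\phi(s_1)+(d-d')\phi(s_2)+d'\phi(s_3)+(d-d')\phi(s_4)+d'(d'-1)\phi(s_5)+d'(d-d')\phi(s_6)+d'(d-d')\phi(s_7)+(d-d')(d-d'-1)\phi(s_8).$$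 Let $(d',b_{d+1})$ be a global maximizer of $\mathrm{score}$ over $d'\in\{0,\dots,d\}$, $b_{d+1}\in\{0,1\}$. Set $\bm b^\top:=(\underbrace{1,\dots,1}_{d'},\underbrace{0,\dots,0}_{d-d'},b_{d+1})$, $\bm P:=\begin{bmatrix}\bm 0_{d,d+1}\\ \bm b^\top\end{bmatrix}$, $\bm Q:=\begin{bmatrix}\bm A&\bm 0_{d+1}\end{bmatrix}$ with $\bm A\in\{0,1\}^{(d+1)\times d}$ given, for $j\in[d+1]$, $k\in[d]$, by - $A_{j,k}=\mathbb 1\big[b_{d+1}r_7+\mathbb 1[k\le d']r_3+(d'-\mathbb 1[k\le d'])r_4\ge0\big]$ if $j=d+1$; - $A_{j,k}=\mathbb 1\big[b_{d+1}r_3+\mathbb 1[j\le d']r_1+(d'-\mathbb 1[j\le d'])r_5\ge0\big]$ if $j\ne d+1$ and $j=k$; - $A_{j,k}=\mathbb 1\big[b_{d+1}r_4+\mathbb 1[j\le d']r_2+\mathbb 1[k\le d']r_5+(d'-\mathbb 1[j\le d']-\mathbb 1[k\le d'])r_6\ge0\big]$ if $j\ne d+1$ and $j\ne k$. Then $(\bm P,\bm Q)$ is a global minimizer of the adversarial pretraining problem $$\min_{\bm P,\bm Q\in[0,1]^{(d+1)\times(d+1)}}\ \mathbb{E}_{c\sim U([d]),\,\{(\bm x_n,y_n)\}_{n=1}^{N+1}\overset{\text{i.i.d.}}{\sim}\mathcal{D}^{\rm tr}_c}\Big[\max_{\|\bm\Delta\|_\infty\le\epsilon}-y_{N+1}[f(\bm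 Z;\bm P,\bm Q)]_{d+1,N+1}\Big].$$
   Context: For $n\in\mathbb{N}$, $[n]:=\{1,\dots,n\}$; $\mathbb 1[\cdot]$ is the indicator. $U(\mathcal S)$ is the uniform distribution on a set $\mathcal S$. $\bm 1_{a}$, $\bm 0_a$, $\bm 0_{a,b}$, $\bm I_a$ denote all-ones/all-zeros vectors and matrices and the identity. $N\in\mathbb{N}$ is fixed. Training distributions: for $c\in[d]$ and $0<\lambda<1$, a sample $(\bm x,y)\sim\mathcal{D}^{\rm tr}_c$ with $\bm x\in\mathbb{R}^d$ is generated as follows: $y\sim U(\{\pm1\})$, $x_c=y$, and for each $i\ne c$, $x_i\sim U([0,\lambda])$ if $y=1$ and $x_i\sim U([-\lambda,0])$ if $y=-1$; given $y$, the coordinates $x_i$ are mutually independent. Transformer: given demonstrations $(\bm x_1,y_1),\dots,(\bm x_N,y_N)$, a query $\bm x_{N+1}\in\mathbb{R}^d$ and a perturbation $\bm\Delta\in\mathbb{R}^d$, let $\bm Z\in\mathbb{R}^{(d+1)\times(N+1)}$ be the matrix whose $n$-th column is $(\bm x_n^\top, y_n)^\top$ for $n\le N$ and whose last column is $((\bm x_{N+1}+\bm\Delta)^\top,0)^\top$. Let $\bm M:=\begin{bmatrix}\bm I_N&0\\0&0\end{bmatrix}\in\mathbb{R}^{(N+1)\times(N+1)}$ and, for $\bm P,\bm Q\in\mathbb{R}^{(d+1)\times(d+1)}$, $f(\bm Z;\bm P,\bm Q):=\frac1N\bm P\bm Z\bm M\bm Z^\top\bm Q\bm Z$. $[\cdot]_{d+1,N+1}$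 denotes the $(d+1,N+1)$ entry. *)

theory Defs
  imports "HOL-Probability.Probability"
begin

definition relu :: "real \<Rightarrow> real" where "relu x = max 0 x"

definition epp :: "real \<Rightarrow> real" where "epp eps = 1 - eps"
definition epm :: "real \<Rightarrow> real \<Rightarrow> real" where "epm lam eps = lam / 2 - eps"

definition r1 :: "nat \<Rightarrow> real \<Rightarrow> real \<Rightarrow> real" where
  "r1 d lam eps = epp eps + lam^2/3 * (real d - 1) * epm lam eps"
definition r2 :: "nat \<Rightarrow> real \<Rightarrow> real \<Rightarrow> real" where
  "r2 d lam eps = epm lam eps + lam^2/3 * epp eps + lam^2/3 * (real d - 2) * epm lam eps"
definition r3 :: "nat \<Rightarrow> real \<Rightarrow> real \<Rightarrow> real" where
  "r3 d lam eps = epp eps + lam/2 * (real d - 1) * epm lam eps"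
definition r4 :: "nat \<Rightarrow> real \<Rightarrow> real \<Rightarrow> real" where
  "r4 d lam eps = epm lam eps + lam/2 * epp eps + lam/2 * (real d - 2) * epm lam eps"
definition r5 :: "nat \<Rightarrow> real \<Rightarrow> real \<Rightarrow> real" where
  "r5 d lam eps = lam/2 * epp eps + lam/2 * epm lam eps + lam^2/4 * (real d - 2) * epm lam eps"
definition r6 :: "nat \<Rightarrow> real \<Rightarrow> real \<Rightarrow> real" where
  "r6 d lam eps = lam * epm lam eps + lam^2/4 * epp eps + lam^2/4 * (real d - 3) * epm lam eps"
definition r7 :: "nat \<Rightarrow> real \<Rightarrow> real \<Rightarrow> real" where
  "r7 d lam eps = epp eps + (real d - 1) * epm lam eps"

definition score :: "nat \<Rightarrow> real \<Rightarrow> real \<Rightarrow> nat \<Rightarrow> nat \<Rightarrow> real" where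
  "score d lam eps d' b =
    (let D = real d; e = real d'; bb = real b;
         s1 = bb * r7 d lam eps + r3 d lam eps + (e - 1) * r4 d lam eps;
         s2 = bb * r7 d lam eps + e * r4 d lam eps;
         s3 = bb * r3 d lam eps + r1 d lam eps + (e - 1) * r5 d lam eps;
         s4 = bb * r3 d lam eps + e * r5 d lam eps;
         s5 = bb * r4 d lam eps + r2 d lam eps + r5 d lam eps + (e - 2) * r6 d lam eps;
         s6 = bb * r4 d lam eps + r2 d lam eps + (e - 1) * r6 d lam eps;
         s7 = bb * r4 d lam eps + r5 d lam eps + (e - 1) * r6 d lam eps;
         s8 = bb * r4 d lam eps + e * r6 d lam eps
     in e * relu s1 + (D - e) * relu s2 + e * relu s3 + (D - e) * relu s4
        + e * (e - 1) * relu s5 + e * (D - e) * relu s6 + e * (D - e) * relu s7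
        + (D - e) * (D - e - 1) * relu s8)"

text \<open>Matrices are functions nat => nat => real, indexed 1-based; only the entries
  in the relevant index ranges matter.\<close>

definition Pmat :: "nat \<Rightarrow> nat \<Rightarrow> nat \<Rightarrow> nat \<Rightarrow> nat \<Rightarrow> real" where
  "Pmat d d' b = (\<lambda>i j. if i = d + 1 then
       (if j \<le> d' then 1 else if j \<le> d then 0 else real b) else 0)"

definition Amat :: "nat \<Rightarrow> real \<Rightarrow> real \<Rightarrow> nat \<Rightarrow> nat \<Rightarrow> nat \<Rightarrow> nat \<Rightarrow> real" where
  "Amat d lam eps d' b = (\<lambda>j k.
     if j = d + 1 then
       of_bool (real b * r7 d lam eps + of_bool (k \<le> d') * r3 d lam eps
                + (real d' - of_bool (k \<le> d')) * r4 d lam eps \<ge> 0)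
     else if j = k then
       of_bool (real b * r3 d lam eps + of_bool (j \<le> d') * r1 d lam eps
                + (real d' - of_bool (j \<le> d')) * r5 d lam eps \<ge> 0)
     else
       of_bool (real b * r4 d lam eps + of_bool (j \<le> d') * r2 d lam eps
                + of_bool (k \<le> d') * r5 d lam eps
                + (real d' - of_bool (j \<le> d') - of_bool (k \<le> d')) * r6 d lam eps \<ge> 0))"

definition Qmat :: "nat \<Rightarrow> real \<Rightarrow> real \<Rightarrow> nat \<Rightarrow> nat \<Rightarrow> nat \<Rightarrow> nat \<Rightarrow> real" where
  "Qmat d lam eps d' b = (\<lambda>j k. if k \<le> d then Amat d lam eps d' b j k else 0)"

definition in01 :: "nat \<Rightarrow> (nat \<Rightarrow> nat \<Rightarrow> real) \<Rightarrow> bool" where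
  "in01 d P \<longleftrightarrow> (\<forall>i\<in>{1..d+1}. \<forall>j\<in>{1..d+1}. 0 \<le> P i j \<and> P i j \<le> 1)"

definition mmul :: "nat \<Rightarrow> (nat \<Rightarrow> nat \<Rightarrow> real) \<Rightarrow> (nat \<Rightarrow> nat \<Rightarrow> real) \<Rightarrow> nat \<Rightarrow> nat \<Rightarrow> real" where
  "mmul k A B = (\<lambda>i j. \<Sum>l\<in>{1..k}. A i l * B l j)"

definition transp_mat :: "(nat \<Rightarrow> nat \<Rightarrow> real) \<Rightarrow> nat \<Rightarrow> nat \<Rightarrow> real" where
  "transp_mat A = (\<lambda>i j. A j i)"

definition Mmask :: "nat \<Rightarrow> nat \<Rightarrow> nat \<Rightarrow> real" where
  "Mmask N = (\<lambda>i j. if i = j \<and> i \<le> N then 1 else 0)"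

definition Zmat :: "nat \<Rightarrow> nat \<Rightarrow> (nat \<Rightarrow> (nat \<Rightarrow> real) \<times> real) \<Rightarrow> (nat \<Rightarrow> real) \<Rightarrow> nat \<Rightarrow> nat \<Rightarrow> real" where
  "Zmat d N S \<Delta> = (\<lambda>i n. if n \<le> N then (if i \<le> d then fst (S n) i else snd (S n))
                          else (if i \<le> d then fst (S (N+1)) i + \<Delta> i else 0))"

text \<open>f(Z;P,Q) = 1/N * P Z M Z^T Q Z.\<close>
definition tf :: "nat \<Rightarrow> nat \<Rightarrow> (nat \<Rightarrow> nat \<Rightarrow> real) \<Rightarrow> (nat \<Rightarrow> nat \<Rightarrow> real) \<Rightarrow> (nat \<Rightarrow> nat \<Rightarrow> real) \<Rightarrow> nat \<Rightarrow> nat \<Rightarrow> real" where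
  "tf d N P Q Z = (\<lambda>i j. (1 / real N) *
     mmul (d+1) (mmul (d+1) (mmul (N+1) (mmul (N+1) (mmul (d+1) P Z) (Mmask N)) (transp_mat Z)) Q) Z i j)"

definition adv_loss :: "nat \<Rightarrow> nat \<Rightarrow> real \<Rightarrow> (nat \<Rightarrow> nat \<Rightarrow> real) \<Rightarrow> (nat \<Rightarrow> nat \<Rightarrow> real)
    \<Rightarrow> (nat \<Rightarrow> (nat \<Rightarrow> real) \<times> real) \<Rightarrow> real" where
  "adv_loss d N eps P Q S =
     (SUP \<Delta>\<in>{\<Delta>. \<forall>i\<in>{1..d}. \<bar>\<Delta> i\<bar> \<le> eps}.
        - snd (S (N+1)) * tf d N P Q (Zmat d N S \<Delta>) (d+1) (N+1))"

definition Dtr :: "nat \<Rightarrow> real \<Rightarrow> nat \<Rightarrow> ((nat \<Rightarrow> real) \<times> real) measure" where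
  "Dtr d lam c = measure_pmf (pmf_of_set {-1, 1::real}) \<bind>
     (\<lambda>y. distr (PiM {1..d} (\<lambda>i. if i = c then return borel y
                                 else if y = 1 then uniform_measure lborel {0..lam}
                                 else uniform_measure lborel {-lam..0}))
                (PiM {1..d} (\<lambda>_. borel) \<Otimes>\<^sub>M borel) (\<lambda>x. (x, y)))"

definition pretrain_obj :: "nat \<Rightarrow> nat \<Rightarrow> real \<Rightarrow> real \<Rightarrow> (nat \<Rightarrow> nat \<Rightarrow> real) \<Rightarrow> (nat \<Rightarrow> nat \<Rightarrow> real) \<Rightarrow> real" where
  "pretrain_obj d N lam eps P Q =
     measure_pmf.expectation (pmf_of_set {1..d})
       (\<lambda>c. lebesgue_integral (PiM {1..N+1} (\<lambda>_. Dtr d lam c)) (adv_loss d N eps P Q))"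

end

theory Submission
  imports Defs
begin

text \<open>
  On almost every sample each feature has the sign of the label, so for P and Q with entries in
  [0, 1] every query weight (the coefficient of a query feature in the prediction) is nonnegative.
  The adversary's best perturbation is then -eps y in every coordinate, and the loss becomes
  sum_l (eps - y x_l) W_l. The query is independent of the demonstrations, so the expectation
  involves only first and second moments of the data: the objective equals
  -1/d sum_{l,m} Q(m,l) K(p)(m,l), where p is the last row of P and K(p) = row_coeff p is linear
  in p.

  For fixed p the minimum over Q is -1/d sum relu (K(p)), attained at Q(m,l) = [K(p)(m,l) >= 0].
  This bound is convex in p, so it is maximised at a vertex of the cube; at a vertex with d' ones
  among the feature coordinates and last entry b it equals score d' b, by the symmetry of the data
  distribution. The stated P and Q attain the best of these values.
\<close>


lemma sum_const_outside:
  fixes f :: "'a \<Rightarrow> real"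
  assumes "finite A" "K \<subseteq> A" "\<And>c. c \<in> A - K \<Longrightarrow> f c = z"
  shows "sum f A = sum f K + (real (card A) - real (card K)) * z"
proof -
  have fK: "finite K" using assms(1,2) by (rule finite_subset[rotated])
  have "sum f A = sum f K + sum f (A - K)"
    using assms(1,2) by (metis sum.subset_diff add.commute)
  also have "sum f (A - K) = real (card (A - K)) * z"
    using assms(3) by simp
  also have "real (card (A - K)) = real (card A) - real (card K)"
    using assms(1,2) fK by (simp add: card_Diff_subset card_mono)
  finally show ?thesis .
qed

lemma sum_if_mem:
  fixes X Y :: real
  assumes "finite A" "S \<subseteq> A"
  shows "(\<Sum>x\<in>A. if x \<in> S then X else Y) = real (card S) * X + (real (card A) - real (card S)) * Y"
  using assms by (subst sum_const_outside[where K = S]) auto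

lemma sum_if_eq:
  fixes X Z :: real
  assumes "finite S"
  shows "(\<Sum>i\<in>S. if i = k then X else Z) = of_bool (k \<in> S) * X + (real (card S) - of_bool (k \<in> S)) * Z"
proof -
  have "(\<Sum>i\<in>S. if i = k then X else Z) = (\<Sum>i\<in>S. Z + (if i = k then X - Z else 0))"
    by (intro sum.cong) auto
  then show ?thesis using assms by (simp add: sum.distrib algebra_simps)
qed

lemma sum_if_eq2:
  fixes X Y Z :: real
  assumes "finite S" "j \<noteq> k"
  shows "(\<Sum>i\<in>S. if i = j then X else if i = k then Y else Z) =
    of_bool (j \<in> S) * X + of_bool (k \<in> S) * Y + (real (card S) - of_bool (j \<in> S) - of_bool (k \<in> S)) * Z"
proof -
  have "(\<Sum>i\<in>S. if i = j then X else if i = k then Y else Z)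
      = (\<Sum>i\<in>S. Z + (if i = j then X - Z else 0) + (if i = k then Y - Z else 0))"
    using assms(2) by (intro sum.cong) auto
  then show ?thesis using assms(1) by (simp add: sum.distrib algebra_simps)
qed

lemma sum_split_label_diag:
  fixes f :: "nat \<Rightarrow> 'a::comm_monoid_add"
  assumes "l \<in> {1..d}"
  shows "(\<Sum>m\<in>{1..d+1}. f m) = f (d+1) + f l + (\<Sum>m\<in>{1..d}-{l}. f m)"
proof -
  have "{1..d+1} = insert (d+1) {1..d}" by auto
  then show ?thesis
    using assms by (simp add: sum.remove add.assoc)
qed

lemma card_remove_real:
  assumes "finite A" "l \<in> A"
  shows "real (card (A - {l})) = real (card A) - 1"
proof -
  have "card A \<ge> 1"
    using assms by (metis One_nat_def Suc_leI card_gt_0_iff empty_iff)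
  then show ?thesis
    using assms by (simp add: card_Diff_singleton)
qed

section \<open>Population coefficients of the loss\<close>

text \<open>For a sample z = (x, y) of class c, extended by z(d+1) = y:
  signed_mean c i = E[y z(i)] and second_moment c i m = E[z(i) z(m)].\<close>
definition signed_mean :: "nat \<Rightarrow> real \<Rightarrow> nat \<Rightarrow> nat \<Rightarrow> real" where
  "signed_mean d lam c i = (if i = c \<or> i = d + 1 then 1 else lam / 2)"

definition second_moment :: "nat \<Rightarrow> real \<Rightarrow> nat \<Rightarrow> nat \<Rightarrow> nat \<Rightarrow> real" where
  "second_moment d lam c i m =
     (if i \<noteq> m then signed_mean d lam c i * signed_mean d lam c m
      else if i = c \<or> i = d + 1 then 1 else lam\<^sup>2 / 3)"

definition robust_margin :: "nat \<Rightarrow> real \<Rightarrow> real \<Rightarrow> nat \<Rightarrow> nat \<Rightarrow> real" where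
  "robust_margin d lam eps c l = signed_mean d lam c l - eps"

definition loss_coeff :: "nat \<Rightarrow> real \<Rightarrow> real \<Rightarrow> nat \<Rightarrow> nat \<Rightarrow> nat \<Rightarrow> real" where
  "loss_coeff d lam eps i m l = (\<Sum>c\<in>{1..d}. robust_margin d lam eps c l * second_moment d lam c i m)"

lemma loss_coeff_commute: "loss_coeff d lam eps i m l = loss_coeff d lam eps m i l"
  unfolding loss_coeff_def second_moment_def by (intro sum.cong) auto

lemmas loss_coeff_simps =
  loss_coeff_def robust_margin_def second_moment_def signed_mean_def
  r1_def r2_def r3_def r4_def r5_def r6_def r7_def epp_def epm_def power2_eq_square

text \<open>Every class outside the few indices involved contributes the same summand z, so
  sum_const_outside reduces each sum to those classes. The label index d + 1 is written Suc d,
  its simp normal form.\<close>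
lemma loss_coeff_label_label:
  assumes "k \<in> {1..d}"
  shows "loss_coeff d lam eps (Suc d) (Suc d) k = r7 d lam eps"
  using assms by (subst loss_coeff_def, subst sum_const_outside[where K = "{k}" and z = "epm lam eps"])
    (auto simp: loss_coeff_simps field_simps)

lemma loss_coeff_label:
  assumes "k \<in> {1..d}" "j \<in> {1..d}"
  shows "loss_coeff d lam eps (Suc d) j k = (if j = k then r3 d lam eps else r4 d lam eps)"
proof (cases "j = k")
  case True
  then show ?thesis using assms
    by (subst loss_coeff_def, subst sum_const_outside[where K = "{k}" and z = "epm lam eps * (lam / 2)"])
      (auto simp: loss_coeff_simps field_simps)
next
  case False
  then show ?thesis using assms
    by (subst loss_coeff_def, subst sum_const_outside[where K = "{j, k}" and z = "epm lam eps * (lam / 2)"])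
      (auto simp: loss_coeff_simps field_simps)
qed

lemma loss_coeff_feature:
  assumes "k \<in> {1..d}" "j \<in> {1..d}" "i \<in> {1..d}"
  shows "loss_coeff d lam eps i j k =
    (if j = k then (if i = j then r1 d lam eps else r5 d lam eps)
     else if i = j then r2 d lam eps else if i = k then r5 d lam eps else r6 d lam eps)"
proof -
  consider "i = j" "j = k" | "i \<noteq> j" "j = k" | "i = j" "j \<noteq> k" | "i = k" "j \<noteq> k"
    | "i \<noteq> j" "i \<noteq> k" "j \<noteq> k" by blast
  then show ?thesis
  proof cases
    case 1
    then show ?thesis using assms
      by (subst loss_coeff_def, subst sum_const_outside[where K = "{k}" and z = "epm lam eps * (lam\<^sup>2 / 3)"])
        (auto simp: loss_coeff_simps field_simps)
  next
    case 2
    then show ?thesis using assms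
      by (subst loss_coeff_def, subst sum_const_outside[where K = "{i, k}" and z = "epm lam eps * (lam\<^sup>2 / 4)"])
        (auto simp: loss_coeff_simps field_simps)
  next
    case 3
    then show ?thesis using assms
      by (subst loss_coeff_def, subst sum_const_outside[where K = "{j, k}" and z = "epm lam eps * (lam\<^sup>2 / 3)"])
        (auto simp: loss_coeff_simps field_simps)
  next
    case 4
    then show ?thesis using assms
      by (subst loss_coeff_def, subst sum_const_outside[where K = "{j, k}" and z = "epm lam eps * (lam\<^sup>2 / 4)"])
        (auto simp: loss_coeff_simps field_simps)
  next
    case 5
    then show ?thesis using assms
      by (subst loss_coeff_def, subst sum_const_outside[where K = "{i, j, k}" and z = "epm lam eps * (lam\<^sup>2 / 4)"])
        (auto simp: loss_coeff_simps field_simps)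
  qed
qed

section \<open>Minimising over Q, maximising over P\<close>

definition row_coeff :: "nat \<Rightarrow> real \<Rightarrow> real \<Rightarrow> (nat \<Rightarrow> real) \<Rightarrow> nat \<Rightarrow> nat \<Rightarrow> real" where
  "row_coeff d lam eps p m l = (\<Sum>i\<in>{1..d+1}. p i * loss_coeff d lam eps i m l)"

definition indicator_row :: "nat \<Rightarrow> nat set \<Rightarrow> nat \<Rightarrow> nat \<Rightarrow> real" where
  "indicator_row d S b i = (if i = d + 1 then real b else of_bool (i \<in> S))"

definition relu_sum :: "nat \<Rightarrow> real \<Rightarrow> real \<Rightarrow> (nat \<Rightarrow> real) \<Rightarrow> real" where
  "relu_sum d lam eps p = (\<Sum>l\<in>{1..d}. \<Sum>m\<in>{1..d+1}. relu (row_coeff d lam eps p m l))"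

context
  fixes d :: nat and lam eps :: real and S :: "nat set" and b :: nat
  assumes S: "S \<subseteq> {1..d}"
begin

lemma finite_S: "finite S"
  using S by (rule finite_subset) simp

lemma row_coeff_indicator_row:
  "row_coeff d lam eps (indicator_row d S b) m k =
     real b * loss_coeff d lam eps (d+1) m k + (\<Sum>i\<in>S. loss_coeff d lam eps i m k)"
proof -
  have "{1..d+1} = insert (d+1) {1..d}" by auto
  then have "row_coeff d lam eps (indicator_row d S b) m k =
      real b * loss_coeff d lam eps (d+1) m k + (\<Sum>i\<in>{1..d}. of_bool (i \<in> S) * loss_coeff d lam eps i m k)"
    by (simp add: row_coeff_def indicator_row_def)
  also have "(\<Sum>i\<in>{1..d}. of_bool (i \<in> S) * loss_coeff d lam eps i m k) = (\<Sum>i\<in>S. loss_coeff d lam eps i m k)"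
    using S by (simp add: Int_absorb1)
  finally show ?thesis .
qed

lemma row_coeff_label:
  assumes "k \<in> {1..d}"
  shows "row_coeff d lam eps (indicator_row d S b) (Suc d) k =
    real b * r7 d lam eps + of_bool (k \<in> S) * r3 d lam eps + (real (card S) - of_bool (k \<in> S)) * r4 d lam eps"
proof -
  have "(\<Sum>i\<in>S. loss_coeff d lam eps i (d+1) k) = (\<Sum>i\<in>S. if i = k then r3 d lam eps else r4 d lam eps)"
    using S assms by (intro sum.cong) (auto simp: loss_coeff_commute[of _ _ _ _ "Suc d"] loss_coeff_label)
  then show ?thesis
    using assms by (simp add: row_coeff_indicator_row loss_coeff_label_label sum_if_eq[OF finite_S])
qed

lemma row_coeff_diag:
  assumes "k \<in> {1..d}"
  shows "row_coeff d lam eps (indicator_row d S b) k k =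
    real b * r3 d lam eps + of_bool (k \<in> S) * r1 d lam eps + (real (card S) - of_bool (k \<in> S)) * r5 d lam eps"
proof -
  have "(\<Sum>i\<in>S. loss_coeff d lam eps i k k) = (\<Sum>i\<in>S. if i = k then r1 d lam eps else r5 d lam eps)"
    using S assms by (intro sum.cong) (auto simp: loss_coeff_feature)
  then show ?thesis
    using assms by (simp add: row_coeff_indicator_row loss_coeff_label sum_if_eq[OF finite_S])
qed

lemma row_coeff_offdiag:
  assumes "k \<in> {1..d}" "j \<in> {1..d}" "j \<noteq> k"
  shows "row_coeff d lam eps (indicator_row d S b) j k =
    real b * r4 d lam eps + of_bool (j \<in> S) * r2 d lam eps + of_bool (k \<in> S) * r5 d lam eps
      + (real (card S) - of_bool (j \<in> S) - of_bool (k \<in> S)) * r6 d lam eps"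
proof -
  have "(\<Sum>i\<in>S. loss_coeff d lam eps i j k) =
      (\<Sum>i\<in>S. if i = j then r2 d lam eps else if i = k then r5 d lam eps else r6 d lam eps)"
    using S assms by (intro sum.cong) (auto simp: loss_coeff_feature)
  then show ?thesis
    using assms by (simp add: row_coeff_indicator_row loss_coeff_label sum_if_eq2[OF finite_S])
qed

lemma relu_sum_offdiag_indicator_row:
  assumes l: "l \<in> {1..d}"
  shows "(\<Sum>m\<in>{1..d}-{l}. relu (row_coeff d lam eps (indicator_row d S b) m l)) = (if l \<in> S
    then (real (card S) - 1) * relu (real b * r4 d lam eps + r2 d lam eps + r5 d lam eps + (real (card S) - 2) * r6 d lam eps)
      + (real d - real (card S)) * relu (real b * r4 d lam eps + r5 d lam eps + (real (card S) - 1) * r6 d lam eps)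
    else real (card S) * relu (real b * r4 d lam eps + r2 d lam eps + (real (card S) - 1) * r6 d lam eps)
      + (real d - real (card S) - 1) * relu (real b * r4 d lam eps + real (card S) * r6 d lam eps))"
proof -
  let ?rc = "row_coeff d lam eps (indicator_row d S b)" and ?e = "real (card S)"
  let ?s5 = "real b * r4 d lam eps + r2 d lam eps + r5 d lam eps + (?e - 2) * r6 d lam eps"
  let ?s6 = "real b * r4 d lam eps + r2 d lam eps + (?e - 1) * r6 d lam eps"
  let ?s7 = "real b * r4 d lam eps + r5 d lam eps + (?e - 1) * r6 d lam eps"
  let ?s8 = "real b * r4 d lam eps + ?e * r6 d lam eps"
  show ?thesis
  proof (cases "l \<in> S")
    case True
    have "(\<Sum>m\<in>{1..d}-{l}. relu (?rc m l)) = (\<Sum>m\<in>{1..d}-{l}. if m \<in> S - {l} then relu ?s5 else relu ?s7)"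
      using True l S by (intro sum.cong) (auto simp: row_coeff_offdiag algebra_simps)
    also have "\<dots> = real (card (S - {l})) * relu ?s5 + (real (card ({1..d}-{l})) - real (card (S - {l}))) * relu ?s7"
      using S by (intro sum_if_mem) auto
    finally show ?thesis
      unfolding card_remove_real[OF finite_S True] card_remove_real[OF finite_atLeastAtMost l]
      using True by (simp add: algebra_simps)
  next
    case False
    have "(\<Sum>m\<in>{1..d}-{l}. relu (?rc m l)) = (\<Sum>m\<in>{1..d}-{l}. if m \<in> S then relu ?s6 else relu ?s8)"
      using False l S by (intro sum.cong) (auto simp: row_coeff_offdiag algebra_simps)
    also have "\<dots> = ?e * relu ?s6 + (real (card ({1..d}-{l})) - ?e) * relu ?s8"
      using S False by (intro sum_if_mem) auto
    finally show ?thesis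
      unfolding card_remove_real[OF finite_atLeastAtMost l] using False by (simp add: algebra_simps)
  qed
qed

lemma relu_sum_indicator_row: "relu_sum d lam eps (indicator_row d S b) = score d lam eps (card S) b"
proof -
  let ?rc = "row_coeff d lam eps (indicator_row d S b)" and ?e = "real (card S)"
  let ?s5 = "real b * r4 d lam eps + r2 d lam eps + r5 d lam eps + (?e - 2) * r6 d lam eps"
  let ?s6 = "real b * r4 d lam eps + r2 d lam eps + (?e - 1) * r6 d lam eps"
  let ?s7 = "real b * r4 d lam eps + r5 d lam eps + (?e - 1) * r6 d lam eps"
  let ?s8 = "real b * r4 d lam eps + ?e * r6 d lam eps"
  have "relu_sum d lam eps (indicator_row d S b) = (\<Sum>l\<in>{1..d}. relu (?rc (d+1) l))
      + (\<Sum>l\<in>{1..d}. relu (?rc l l)) + (\<Sum>l\<in>{1..d}. \<Sum>m\<in>{1..d}-{l}. relu (?rc m l))"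
    unfolding relu_sum_def sum.distrib[symmetric] by (rule sum.cong[OF refl sum_split_label_diag])
  also have "\<dots> = (\<Sum>l\<in>{1..d}. if l \<in> S
        then relu (real b * r7 d lam eps + r3 d lam eps + (?e - 1) * r4 d lam eps)
        else relu (real b * r7 d lam eps + ?e * r4 d lam eps))
      + (\<Sum>l\<in>{1..d}. if l \<in> S
        then relu (real b * r3 d lam eps + r1 d lam eps + (?e - 1) * r5 d lam eps)
        else relu (real b * r3 d lam eps + ?e * r5 d lam eps))
      + (\<Sum>l\<in>{1..d}. if l \<in> S
        then (?e - 1) * relu ?s5 + (real d - ?e) * relu ?s7
        else ?e * relu ?s6 + (real d - ?e - 1) * relu ?s8)"
    by (intro arg_cong2[where f = "(+)"] sum.cong refl relu_sum_offdiag_indicator_row)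
      (simp_all add: row_coeff_label row_coeff_diag)
  also have "\<dots> = score d lam eps (card S) b"
    unfolding sum_if_mem[OF finite_atLeastAtMost S] score_def Let_def by (simp add: algebra_simps)
  finally show ?thesis .
qed

end

lemma row_coeff_cong:
  "(\<And>i. i \<in> {1..d+1} \<Longrightarrow> p i = q i) \<Longrightarrow> row_coeff d lam eps p m l = row_coeff d lam eps q m l"
  unfolding row_coeff_def by (intro sum.cong) auto

lemma relu_sum_cong:
  "(\<And>i. i \<in> {1..d+1} \<Longrightarrow> p i = q i) \<Longrightarrow> relu_sum d lam eps p = relu_sum d lam eps q"
  unfolding relu_sum_def by (intro sum.cong refl arg_cong[where f = relu] row_coeff_cong)

lemma relu_convex:
  assumes "0 \<le> t" "t \<le> 1"
  shows "relu ((1 - t) * a + t * c) \<le> (1 - t) * relu a + t * relu c"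
proof -
  have "(1 - t) * a \<le> (1 - t) * relu a" "t * c \<le> t * relu c"
    using assms by (auto intro!: mult_left_mono simp: relu_def)
  moreover have "0 \<le> (1 - t) * relu a + t * relu c"
    using assms by (simp add: relu_def)
  ultimately show ?thesis
    by (simp add: relu_def)
qed

lemma row_coeff_fun_upd:
  "row_coeff d lam eps (p(i := t)) m l =
     (1 - t) * row_coeff d lam eps (p(i := 0)) m l + t * row_coeff d lam eps (p(i := 1)) m l"
  unfolding row_coeff_def sum_distrib_left sum.distrib[symmetric]
  by (intro sum.cong) (auto simp: algebra_simps)

lemma relu_sum_fun_upd_le_max:
  assumes "0 \<le> t" "t \<le> 1"
  shows "relu_sum d lam eps (p(i := t)) \<le> max (relu_sum d lam eps (p(i := 0))) (relu_sum d lam eps (p(i := 1)))"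
proof -
  have "relu_sum d lam eps (p(i := t)) \<le> (1 - t) * relu_sum d lam eps (p(i := 0)) + t * relu_sum d lam eps (p(i := 1))"
    unfolding relu_sum_def row_coeff_fun_upd[of d lam eps p i t] sum_distrib_left sum.distrib[symmetric]
    by (intro sum_mono relu_convex assms)
  also have "\<dots> \<le> max (relu_sum d lam eps (p(i := 0))) (relu_sum d lam eps (p(i := 1)))"
    using assms by (simp add: convex_bound_le)
  finally show ?thesis .
qed

lemma cube_max_at_vertex:
  fixes F :: "('a \<Rightarrow> real) \<Rightarrow> real"
  assumes F: "\<And>p i t. 0 \<le> t \<Longrightarrow> t \<le> 1 \<Longrightarrow> F (p(i := t)) \<le> max (F (p(i := 0))) (F (p(i := 1)))"
    and "finite J" and "\<forall>i\<in>J. 0 \<le> p i \<and> p i \<le> 1"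
  shows "\<exists>q. (\<forall>i\<in>J. q i = 0 \<or> q i = 1) \<and> (\<forall>i. i \<notin> J \<longrightarrow> q i = p i) \<and> F p \<le> F q"
  using assms(2,3)
proof (induction J arbitrary: p rule: finite_induct)
  case empty
  then show ?case by blast
next
  case (insert i J)
  have rounded: "\<exists>q. (\<forall>j\<in>insert i J. q j = 0 \<or> q j = 1) \<and> (\<forall>j. j \<notin> insert i J \<longrightarrow> q j = p j)
      \<and> F (p(i := s)) \<le> F q" if "s = 0 \<or> s = 1" for s
  proof -
    obtain q where "\<forall>j\<in>J. q j = 0 \<or> q j = 1" "\<forall>j. j \<notin> J \<longrightarrow> q j = (p(i := s)) j" "F (p(i := s)) \<le> F q"
      using insert.IH[of "p(i := s)"] insert.prems insert.hyps(2) by fastforce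
    then show ?thesis
      using that insert.hyps(2) by (intro exI[of _ q]) auto
  qed
  have "F p \<le> max (F (p(i := 0))) (F (p(i := 1)))"
    using F[of "p i" p i] insert.prems by simp
  then consider "F p \<le> F (p(i := 0))" | "F p \<le> F (p(i := 1))"
    by linarith
  then show ?case
    using rounded[of 0] rounded[of 1] by cases (auto intro: order_trans)
qed

lemma relu_sum_le_score:
  assumes "\<forall>i\<in>{1..d+1}. 0 \<le> p i \<and> p i \<le> 1"
  shows "\<exists>S b. S \<subseteq> {1..d} \<and> b \<le> 1 \<and> relu_sum d lam eps p \<le> score d lam eps (card S) b"
proof -
  obtain q where q01: "\<forall>i\<in>{1..d+1}. q i = 0 \<or> q i = 1" and le: "relu_sum d lam eps p \<le> relu_sum d lam eps q"
    using cube_max_at_vertex[where F = "relu_sum d lam eps", OF relu_sum_fun_upd_le_max finite_atLeastAtMost assms]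
    by blast
  define S where "S = {i\<in>{1..d}. q i = 1}"
  define b :: nat where "b = (if q (d+1) = 1 then 1 else 0)"
  have "relu_sum d lam eps q = relu_sum d lam eps (indicator_row d S b)"
  proof (rule relu_sum_cong)
    fix i assume "i \<in> {1..d+1}"
    then show "q i = indicator_row d S b i"
      using q01 by (cases "i = d+1") (auto simp: indicator_row_def S_def b_def)
  qed
  also have "\<dots> = score d lam eps (card S) b"
    by (rule relu_sum_indicator_row) (auto simp: S_def)
  finally show ?thesis
    using le by (intro exI[of _ S] exI[of _ b]) (auto simp: S_def b_def)
qed

definition expected_loss :: "nat \<Rightarrow> real \<Rightarrow> real \<Rightarrow> (nat \<Rightarrow> nat \<Rightarrow> real) \<Rightarrow> (nat \<Rightarrow> nat \<Rightarrow> real) \<Rightarrow> real" where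
  "expected_loss d lam eps P Q =
     - (\<Sum>l\<in>{1..d}. \<Sum>m\<in>{1..d+1}. Q m l * row_coeff d lam eps (P (d+1)) m l) / real d"

lemma mult_le_relu:
  assumes "0 \<le> q" "q \<le> 1"
  shows "q * x \<le> relu x"
proof (cases "x \<ge> 0")
  case True
  then have "q * x \<le> x"
    using assms by (simp add: mult_left_le_one_le)
  then show ?thesis
    using True by (simp add: relu_def)
next
  case False
  then have "q * x \<le> 0"
    using assms by (simp add: mult_nonneg_nonpos)
  then show ?thesis
    by (simp add: relu_def)
qed

lemma expected_loss_lower_bound:
  assumes "in01 d P" "in01 d Q"
    and opt: "\<forall>d''\<le>d. \<forall>b''\<le>1. score d lam eps d'' b'' \<le> score d lam eps d' b"
  shows "- score d lam eps d' b / real d \<le> expected_loss d lam eps P Q"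
proof -
  have box: "\<forall>i\<in>{1..d+1}. 0 \<le> P (d+1) i \<and> P (d+1) i \<le> 1"
    using assms(1) by (simp add: in01_def)
  obtain S b'' where S: "S \<subseteq> {1..d}" "b'' \<le> 1"
    and le_score: "relu_sum d lam eps (P (d+1)) \<le> score d lam eps (card S) b''"
    using relu_sum_le_score[OF box] by blast
  have "card S \<le> d"
    using card_mono[OF _ S(1)] by simp
  have "(\<Sum>l\<in>{1..d}. \<Sum>m\<in>{1..d+1}. Q m l * row_coeff d lam eps (P (d+1)) m l) \<le> relu_sum d lam eps (P (d+1))"
    unfolding relu_sum_def using assms(2) unfolding in01_def by (intro sum_mono mult_le_relu) auto
  also have "\<dots> \<le> score d lam eps d' b"
    using le_score opt \<open>card S \<le> d\<close> S(2) by (meson order_trans)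
  finally show ?thesis
    unfolding expected_loss_def by (intro divide_right_mono) auto
qed

lemma expected_loss_Pmat_Qmat:
  assumes "d' \<le> d"
  shows "expected_loss d lam eps (Pmat d d' b) (Qmat d lam eps d' b) = - score d lam eps d' b / real d"
proof -
  let ?p = "Pmat d d' b (Suc d)"
  define S where "S = {1..d'}"
  have S: "S \<subseteq> {1..d}" and card_S: "card S = d'" and mem_S: "\<And>l. l \<in> {1..d} \<Longrightarrow> l \<in> S \<longleftrightarrow> l \<le> d'"
    using assms by (auto simp: S_def)
  have row: "row_coeff d lam eps ?p m l = row_coeff d lam eps (indicator_row d S b) m l" for m l
    using assms by (intro row_coeff_cong) (auto simp: Pmat_def indicator_row_def S_def)
  have Q: "Qmat d lam eps d' b m l = of_bool (row_coeff d lam eps ?p m l \<ge> 0)"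
    if l: "l \<in> {1..d}" and m: "m \<in> {1..d+1}" for l m
  proof -
    consider "m = d+1" | "m = l" | "m \<in> {1..d}" "m \<noteq> l"
      using m by fastforce
    then show ?thesis
      by cases (use l in \<open>simp_all add: Qmat_def Amat_def row row_coeff_label[OF S] row_coeff_diag[OF S]
        row_coeff_offdiag[OF S] mem_S card_S\<close>)
  qed
  have "(\<Sum>l\<in>{1..d}. \<Sum>m\<in>{1..d+1}. Qmat d lam eps d' b m l * row_coeff d lam eps ?p m l) = relu_sum d lam eps ?p"
    unfolding relu_sum_def by (intro sum.cong refl) (simp add: Q relu_def)
  also have "\<dots> = score d lam eps d' b"
    using relu_sum_indicator_row[OF S] by (simp add: relu_sum_def row card_S)
  finally show ?thesis
    by (simp add: expected_loss_def)
qed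

lemma integral_PiM_component:
  fixes f :: "'b \<Rightarrow> real"
  assumes "\<And>k. k \<in> I \<Longrightarrow> prob_space (M k)" "i \<in> I" "f \<in> borel_measurable (M i)"
  shows "(\<integral>x. f (x i) \<partial>PiM I M) = integral\<^sup>L (M i) f"
proof -
  have "integral\<^sup>L (M i) f = integral\<^sup>L (distr (PiM I M) (M i) (\<lambda>x. x i)) f"
    using distr_PiM_component[of I M i] assms(1,2) by simp
  also have "\<dots> = (\<integral>x. f (x i) \<partial>PiM I M)"
    using assms(2,3) by (intro integral_distr measurable_component_singleton)
  finally show ?thesis ..
qed

lemma prod_two_points:
  fixes a b :: "'i \<Rightarrow> 'r::comm_monoid_mult"
  assumes "finite I" "i \<in> I" "j \<in> I" "i \<noteq> j"
  shows "(\<Prod>k\<in>I. if k = i then a k else if k = j then b k else 1) = a i * b j"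
proof -
  have "(\<Prod>k\<in>I. if k = i then a k else if k = j then b k else 1)
      = (\<Prod>k\<in>I. (if k = i then a k else 1) * (if k = j then b k else 1))"
    using assms(4) by (intro prod.cong) auto
  then show ?thesis
    using assms(1-3) by (simp add: prod.distrib)
qed

lemma
  fixes f g :: "'b \<Rightarrow> real"
  assumes I: "finite I" "i \<in> I" "j \<in> I" "i \<noteq> j" and M: "\<And>k. prob_space (M k)"
    and "integrable (M i) f" "integrable (M j) g"
  shows integrable_PiM_two_components: "integrable (PiM I M) (\<lambda>x. f (x i) * g (x j))"
    and integral_PiM_two_components:
      "(\<integral>x. f (x i) * g (x j) \<partial>PiM I M) = integral\<^sup>L (M i) f * integral\<^sup>L (M j) g"
proof -
  interpret product_prob_space M
    using M by (simp add: product_prob_space_def product_sigma_finite_def prob_space_imp_sigma_finite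
        product_prob_space_axioms_def)
  define F where "F k t = (if k = i then f t else if k = j then g t else 1)" for k t
  have F: "integrable (M k) (F k)" for k
    unfolding F_def[abs_def] using assms
    by (cases "k = i"; cases "k = j") (auto intro: finite_measure.integrable_const[OF prob_space.finite_measure[OF M]])
  have prod_F: "(\<lambda>x. f (x i) * g (x j)) = (\<lambda>x. \<Prod>k\<in>I. F k (x k))"
    unfolding F_def prod_two_points[OF I] ..
  show "integrable (PiM I M) (\<lambda>x. f (x i) * g (x j))"
    unfolding prod_F by (intro product_integrable_prod I(1) F)
  have "(\<integral>x. f (x i) * g (x j) \<partial>PiM I M) = (\<Prod>k\<in>I. integral\<^sup>L (M k) (F k))"
    unfolding prod_F by (intro product_integral_prod I(1) F)
  also have "\<dots> = (\<Prod>k\<in>I. if k = i then integral\<^sup>L (M i) f else if k = j then integral\<^sup>L (M j) g else 1)"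
    by (intro prod.cong) (auto simp: F_def prob_space.prob_space[OF M] F_def[abs_def])
  finally show "(\<integral>x. f (x i) * g (x j) \<partial>PiM I M) = integral\<^sup>L (M i) f * integral\<^sup>L (M j) g"
    unfolding prod_two_points[OF I] .
qed

lemma integral_uniform_power:
  fixes a b :: real
  assumes "a < b"
  shows "integral\<^sup>L (uniform_measure lborel {a..b}) (\<lambda>x. x ^ k) = (b ^ Suc k - a ^ Suc k) / (Suc k * (b - a))"
proof -
  have "uniform_measure lborel {a..b} = density lborel (\<lambda>x. ennreal (indicator {a..b} x / (b - a)))"
    unfolding uniform_measure_def using assms divide_ennreal[of 1 "b - a"]
    by (intro density_cong) (auto simp: indicator_def)
  then have "integral\<^sup>L (uniform_measure lborel {a..b}) (\<lambda>x. x ^ k) = (\<integral>x. x ^ k * indicator {a..b} x \<partial>lborel) / (b - a)"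
    using assms by (simp add: integral_density mult.commute)
  also have "\<dots> = (b ^ Suc k - a ^ Suc k) / Suc k / (b - a)"
    using assms by (subst integral_power) auto
  finally show ?thesis by simp
qed

section \<open>The training distribution\<close>

definition clip :: "real \<Rightarrow> real" where
  "clip t = max (-1) (min 1 t)"

lemma measurable_clip [measurable]: "clip \<in> borel_measurable borel"
  unfolding clip_def by measurable

lemma abs_clip_le: "\<bar>clip t\<bar> \<le> 1"
  unfolding clip_def by auto

lemma clip_eq: "\<bar>t\<bar> \<le> 1 \<Longrightarrow> clip t = t"
  unfolding clip_def by auto

definition feature_law :: "real \<Rightarrow> nat \<Rightarrow> real \<Rightarrow> nat \<Rightarrow> real measure" where
  "feature_law lam c y i =
     (if i = c then return borel y
      else if y = 1 then uniform_measure lborel {0..lam} else uniform_measure lborel {-lam..0})"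

definition features_law :: "nat \<Rightarrow> real \<Rightarrow> nat \<Rightarrow> real \<Rightarrow> (nat \<Rightarrow> real) measure" where
  "features_law d lam c y = PiM {1..d} (feature_law lam c y)"

definition sample_borel :: "nat \<Rightarrow> ((nat \<Rightarrow> real) \<times> real) measure" where
  "sample_borel d = PiM {1..d} (\<lambda>_. borel) \<Otimes>\<^sub>M borel"

definition labelled_law :: "nat \<Rightarrow> real \<Rightarrow> nat \<Rightarrow> real \<Rightarrow> ((nat \<Rightarrow> real) \<times> real) measure" where
  "labelled_law d lam c y = distr (features_law d lam c y) (sample_borel d) (\<lambda>x. (x, y))"

lemma Dtr_eq_bind: "Dtr d lam c = measure_pmf (pmf_of_set {-1, 1}) \<bind> labelled_law d lam c"
  unfolding Dtr_def labelled_law_def features_law_def feature_law_def sample_borel_def ..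

definition typical :: "nat \<Rightarrow> (nat \<Rightarrow> real) \<times> real \<Rightarrow> bool" where
  "typical d w \<longleftrightarrow> snd w \<in> {-1, 1} \<and> (\<forall>i\<in>{1..d}. 0 \<le> snd w * fst w i \<and> \<bar>fst w i\<bar> \<le> 1)"

lemma pred_typical [measurable]: "Measurable.pred (sample_borel d) (typical d)"
  unfolding sample_borel_def typical_def by measurable

lemma sets_feature_law: "sets (feature_law lam c y i) = sets borel"
  unfolding feature_law_def by auto

lemma sets_features_law: "sets (features_law d lam c y) = sets (PiM {1..d} (\<lambda>_. borel))"
  unfolding features_law_def by (intro sets_PiM_cong) (auto simp: sets_feature_law)

lemma measurable_label: "(\<lambda>x. (x, y)) \<in> measurable (features_law d lam c y) (sample_borel d)"
  unfolding sample_borel_def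
  by (intro measurable_Pair measurable_const measurable_ident_sets[OF sets_features_law]) simp

definition entry :: "nat \<Rightarrow> (nat \<Rightarrow> real) \<times> real \<Rightarrow> nat \<Rightarrow> real" where
  "entry d w i = (if i \<le> d then fst w i else snd w)"

definition clipped_entry :: "nat \<Rightarrow> (nat \<Rightarrow> real) \<times> real \<Rightarrow> nat \<Rightarrow> real" where
  "clipped_entry d w i = clip (entry d w i)"

lemma abs_clipped_entry_le: "\<bar>clipped_entry d w i\<bar> \<le> 1"
  unfolding clipped_entry_def by (rule abs_clip_le)

lemma abs_clipped_entry_mult_le: "\<bar>clipped_entry d w i * clipped_entry d w m\<bar> \<le> 1"
  unfolding abs_mult by (intro mult_le_one abs_clipped_entry_le) auto

lemma abs_sum_clipped_entries_le:
  "\<bar>\<Sum>i\<in>A. p i * clipped_entry d w i\<bar> \<le> (\<Sum>i\<in>A. \<bar>p i\<bar>)"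
proof -
  have "\<bar>\<Sum>i\<in>A. p i * clipped_entry d w i\<bar> \<le> (\<Sum>i\<in>A. \<bar>p i * clipped_entry d w i\<bar>)"
    by (rule sum_abs)
  also have "\<dots> \<le> (\<Sum>i\<in>A. \<bar>p i\<bar>)"
    unfolding abs_mult using abs_clipped_entry_le[of d w] by (intro sum_mono) (simp add: mult_left_le)
  finally show ?thesis .
qed

lemma measurable_entry [measurable]:
  assumes "i \<in> {1..d+1}"
  shows "(\<lambda>w. entry d w i) \<in> borel_measurable (sample_borel d)"
  using assms unfolding entry_def sample_borel_def by (cases "i \<le> d") auto

lemma measurable_clipped_entry [measurable]:
  assumes "i \<in> {1..d+1}"
  shows "(\<lambda>w. clipped_entry d w i) \<in> borel_measurable (sample_borel d)"
  unfolding clipped_entry_def using assms by measurable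

lemma clipped_entry_label:
  assumes "y \<in> {-1, 1}"
  shows "clipped_entry d (x, y) i = (if i \<le> d then clip (x i) else y)"
  using assms by (auto simp: clipped_entry_def entry_def clip_eq)

context
  fixes lam :: real
  assumes lam_pos: "0 < lam"
begin

lemma prob_space_feature_law: "prob_space (feature_law lam c y i)"
  unfolding feature_law_def using lam_pos by (auto intro!: prob_space_return prob_space_uniform_measure)

lemma prob_space_features_law: "prob_space (features_law d lam c y)"
  unfolding features_law_def by (intro prob_space_PiM prob_space_feature_law)

lemma prob_space_labelled_law: "prob_space (labelled_law d lam c y)"
  unfolding labelled_law_def by (intro prob_space.prob_space_distr prob_space_features_law measurable_label)

lemma labelled_law_subprob: "labelled_law d lam c \<in> measurable (measure_pmf p) (subprob_algebra (sample_borel d))"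
  using prob_space_labelled_law
  by (auto simp: space_subprob_algebra labelled_law_def prob_space_imp_subprob_space)

lemma prob_space_Dtr: "prob_space (Dtr d lam c)"
  unfolding Dtr_eq_bind
  by (intro prob_space.prob_space_bind[OF prob_space_measure_pmf, where S = "sample_borel d"] AE_I2
      labelled_law_subprob prob_space_labelled_law)

lemma sets_Dtr: "sets (Dtr d lam c) = sets (sample_borel d)"
  unfolding Dtr_eq_bind by (rule sets_bind_measurable[OF labelled_law_subprob]) simp

text \<open>integral_bind needs an integrand that is bounded everywhere; this is why the entries are
  clipped to [-1, 1] below, which changes them only on a null set.\<close>

lemma integral_Dtr:
  fixes h :: "(nat \<Rightarrow> real) \<times> real \<Rightarrow> real"
  assumes h [measurable]: "h \<in> borel_measurable (sample_borel d)"
    and bounded: "\<And>w. \<bar>h w\<bar> \<le> B"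
  shows "integral\<^sup>L (Dtr d lam c) h =
    (integral\<^sup>L (features_law d lam c (-1)) (\<lambda>x. h (x, -1)) + integral\<^sup>L (features_law d lam c 1) (\<lambda>x. h (x, 1))) / 2"
proof -
  have "integral\<^sup>L (Dtr d lam c) h = (\<integral>y. integral\<^sup>L (labelled_law d lam c y) h \<partial>measure_pmf (pmf_of_set {-1, 1}))"
    unfolding Dtr_eq_bind using bounded
    by (intro integral_bind[where B' = 1 and K = "sample_borel d"] labelled_law_subprob
        prob_space.finite_measure prob_space_measure_pmf AE_I2)
      (auto simp: prob_space.emeasure_space_1[OF prob_space_labelled_law])
  also have "\<dots> = (integral\<^sup>L (labelled_law d lam c (-1)) h + integral\<^sup>L (labelled_law d lam c 1) h) / 2"
    by (subst integral_pmf_of_set) auto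
  finally show ?thesis
    by (simp add: labelled_law_def integral_distr[OF measurable_label h])
qed

lemma integrable_Dtr_bounded:
  fixes f :: "(nat \<Rightarrow> real) \<times> real \<Rightarrow> real"
  assumes "f \<in> borel_measurable (sample_borel d)" "\<And>w. \<bar>f w\<bar> \<le> B"
  shows "integrable (Dtr d lam c) f"
proof -
  interpret prob_space "Dtr d lam c"
    by (rule prob_space_Dtr)
  show ?thesis
    using assms by (intro integrable_const_bound[where B = B]) (auto simp: measurable_cong_sets[OF sets_Dtr refl])
qed

lemma integrable_Dtr_margin:
  assumes "l \<in> {1..d}"
  shows "integrable (Dtr d lam c) (\<lambda>w. eps - clipped_entry d w (d+1) * clipped_entry d w l)"
proof (rule integrable_Dtr_bounded[where B = "\<bar>eps\<bar> + 1"])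
  have "l \<in> {1..d+1}"
    using assms by auto
  then show "(\<lambda>w. eps - clipped_entry d w (d+1) * clipped_entry d w l) \<in> borel_measurable (sample_borel d)"
    by measurable
  show "\<bar>eps - clipped_entry d w (d+1) * clipped_entry d w l\<bar> \<le> \<bar>eps\<bar> + 1" for w
    using abs_clipped_entry_mult_le[of d w "d+1" l] by linarith
qed

lemma integrable_Dtr_bilinear:
  "integrable (Dtr d lam c)
     (\<lambda>w. (\<Sum>i\<in>{1..d+1}. p i * clipped_entry d w i) * (\<Sum>m\<in>{1..d+1}. q m * clipped_entry d w m))"
proof (rule integrable_Dtr_bounded[where B = "(\<Sum>i\<in>{1..d+1}. \<bar>p i\<bar>) * (\<Sum>m\<in>{1..d+1}. \<bar>q m\<bar>)"])
  show "(\<lambda>w. (\<Sum>i\<in>{1..d+1}. p i * clipped_entry d w i) * (\<Sum>m\<in>{1..d+1}. q m * clipped_entry d w m))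
      \<in> borel_measurable (sample_borel d)"
    by measurable
  show "\<bar>(\<Sum>i\<in>{1..d+1}. p i * clipped_entry d w i) * (\<Sum>m\<in>{1..d+1}. q m * clipped_entry d w m)\<bar>
      \<le> (\<Sum>i\<in>{1..d+1}. \<bar>p i\<bar>) * (\<Sum>m\<in>{1..d+1}. \<bar>q m\<bar>)" for w
    unfolding abs_mult by (intro mult_mono abs_sum_clipped_entries_le) (auto intro: sum_nonneg)
qed

lemma integral_feature_law_power:
  assumes "y \<in> {-1, 1}"
  shows "integral\<^sup>L (feature_law lam c y k) (\<lambda>t. t ^ n) = y ^ n * (if k = c then 1 else lam ^ n / (n + 1))"
proof (cases "k = c")
  case True
  then show ?thesis by (simp add: feature_law_def integral_return)
next
  case False
  then consider "y = 1" "k \<noteq> c" | "y = -1" "k \<noteq> c"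
    using assms by auto
  then show ?thesis
    by cases (use lam_pos in \<open>simp_all add: feature_law_def integral_uniform_power power_minus'\<close>)
qed

end

context
  fixes lam :: real
  assumes lam_pos: "0 < lam" and lam_less_1: "lam < 1"
begin

lemma AE_feature_law:
  assumes "y \<in> {-1, 1}"
  shows "AE t in feature_law lam c y k. 0 \<le> y * t \<and> \<bar>t\<bar> \<le> 1"
proof -
  have "Measurable.pred borel (\<lambda>t. 0 \<le> y * t \<and> \<bar>t\<bar> \<le> 1)"
    by measurable
  then show ?thesis
    using assms lam_pos lam_less_1 unfolding feature_law_def
    by (auto simp: AE_return AE_uniform_measure)
qed

lemma AE_typical: "AE w in Dtr d lam c. typical d w"
proof -
  have "AE x in features_law d lam c y. typical d (x, y)" if y: "y \<in> {-1, 1}" for y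
  proof -
    have "AE x in features_law d lam c y. \<forall>i\<in>{1..d}. 0 \<le> y * x i \<and> \<bar>x i\<bar> \<le> 1"
      unfolding features_law_def
      by (intro AE_finite_allI AE_PiM_component[where P = "\<lambda>t. 0 \<le> y * t \<and> \<bar>t\<bar> \<le> 1"]
          prob_space_feature_law[OF lam_pos] AE_feature_law y) auto
    then show ?thesis
      using y unfolding typical_def by auto
  qed
  then have "AE w in labelled_law d lam c y. typical d w" if "y \<in> {-1, 1}" for y
    using that unfolding labelled_law_def by (simp add: AE_distr_iff[OF measurable_label])
  then show ?thesis
    unfolding Dtr_eq_bind by (simp add: AE_bind[OF labelled_law_subprob[OF lam_pos]] AE_measure_pmf_iff)
qed

lemma integral_clip_feature_law_power:
  assumes "y \<in> {-1, 1}"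
  shows "integral\<^sup>L (feature_law lam c y k) (\<lambda>t. clip t ^ n) = y ^ n * (if k = c then 1 else lam ^ n / (n + 1))"
proof -
  have "AE t in feature_law lam c y k. clip t ^ n = t ^ n"
    using AE_feature_law[OF assms] by eventually_elim (simp add: clip_eq)
  moreover have "(\<lambda>t. clip t ^ n) \<in> borel_measurable (feature_law lam c y k)"
    "(\<lambda>t. t ^ n) \<in> borel_measurable (feature_law lam c y k)"
    unfolding measurable_cong_sets[OF sets_feature_law refl] by simp_all
  ultimately have "integral\<^sup>L (feature_law lam c y k) (\<lambda>t. clip t ^ n) = integral\<^sup>L (feature_law lam c y k) (\<lambda>t. t ^ n)"
    by (intro integral_cong_AE)
  then show ?thesis
    by (simp add: integral_feature_law_power[OF lam_pos assms])
qed

end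

context
  fixes lam :: real and d c :: nat and y :: real
  assumes lam_pos: "0 < lam" and lam_less_1: "lam < 1" and y: "y \<in> {-1, 1}"
begin

lemma integral_features_law_clip:
  assumes "k \<in> {1..d}"
  shows "(\<integral>x. clip (x k) \<partial>features_law d lam c y) = y * signed_mean d lam c k"
  using assms integral_clip_feature_law_power[OF lam_pos lam_less_1 y, of c k 1]
  by (subst features_law_def, subst integral_PiM_component[OF prob_space_feature_law[OF lam_pos]])
    (auto simp: signed_mean_def measurable_cong_sets[OF sets_feature_law refl])

lemma integral_features_law_clip_mult:
  assumes "k \<in> {1..d}" "k' \<in> {1..d}"
  shows "(\<integral>x. clip (x k) * clip (x k') \<partial>features_law d lam c y) = second_moment d lam c k k'"
proof (cases "k = k'")
  case True
  have "(\<integral>x. clip (x k) ^ 2 \<partial>features_law d lam c y) = integral\<^sup>L (feature_law lam c y k) (\<lambda>t. clip t ^ 2)"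
    using assms unfolding features_law_def
    by (intro integral_PiM_component prob_space_feature_law[OF lam_pos])
      (auto simp: measurable_cong_sets[OF sets_feature_law refl])
  then show ?thesis
    using True assms y integral_clip_feature_law_power[OF lam_pos lam_less_1 y, of c k 2]
    by (auto simp: second_moment_def power2_eq_square)
next
  case False
  have "integrable (feature_law lam c y j) clip" for j
    using prob_space_feature_law[OF lam_pos]
    by (intro finite_measure.integrable_const_bound[where B = 1] prob_space.finite_measure)
      (auto simp: abs_clip_le measurable_cong_sets[OF sets_feature_law refl])
  then have "(\<integral>x. clip (x k) * clip (x k') \<partial>features_law d lam c y) =
      integral\<^sup>L (feature_law lam c y k) clip * integral\<^sup>L (feature_law lam c y k') clip"
    using assms False unfolding features_law_def
    by (intro integral_PiM_two_components prob_space_feature_law[OF lam_pos]) auto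
  then show ?thesis
    using False assms y integral_clip_feature_law_power[OF lam_pos lam_less_1 y, of c _ 1]
    by (auto simp: second_moment_def signed_mean_def)
qed

lemma integral_features_law_clipped_entries:
  assumes i: "i \<in> {1..d+1}" and m: "m \<in> {1..d+1}"
  shows "(\<integral>x. clipped_entry d (x, y) i * clipped_entry d (x, y) m \<partial>features_law d lam c y) = second_moment d lam c i m"
proof -
  interpret prob_space "features_law d lam c y"
    by (rule prob_space_features_law[OF lam_pos])
  have yy: "y * y = 1"
    using y by auto
  have label: "signed_mean d lam c (Suc d) = 1"
    by (simp add: signed_mean_def)
  consider "i = d+1" "m = d+1" | "i = d+1" "m \<in> {1..d}" | "i \<in> {1..d}" "m = d+1" | "i \<in> {1..d}" "m \<in> {1..d}"
    using i m by fastforce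
  then show ?thesis
  proof cases
    case 1
    then have "(\<integral>x. clipped_entry d (x, y) i * clipped_entry d (x, y) m \<partial>features_law d lam c y) = y * y"
      by (simp add: clipped_entry_label[OF y] prob_space)
    then show ?thesis
      using 1 yy by (simp add: second_moment_def)
  next
    case 2
    then have "(\<integral>x. clipped_entry d (x, y) i * clipped_entry d (x, y) m \<partial>features_law d lam c y)
        = y * (\<integral>x. clip (x m) \<partial>features_law d lam c y)"
      by (simp add: clipped_entry_label[OF y])
    then show ?thesis
      using 2 yy by (simp add: integral_features_law_clip second_moment_def label)
  next
    case 3
    then have "(\<integral>x. clipped_entry d (x, y) i * clipped_entry d (x, y) m \<partial>features_law d lam c y)
        = (\<integral>x. clip (x i) \<partial>features_law d lam c y) * y"
      by (simp add: clipped_entry_label[OF y])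
    then show ?thesis
      using 3 yy by (simp add: integral_features_law_clip second_moment_def label)
  next
    case 4
    then show ?thesis
      by (simp add: clipped_entry_label[OF y] integral_features_law_clip_mult)
  qed
qed

end

lemma integral_Dtr_clipped_entries:
  assumes "0 < lam" "lam < 1" "i \<in> {1..d+1}" "m \<in> {1..d+1}"
  shows "(\<integral>w. clipped_entry d w i * clipped_entry d w m \<partial>Dtr d lam c) = second_moment d lam c i m"
  using assms
  by (subst integral_Dtr[where B = 1]) (simp_all add: abs_clipped_entry_mult_le integral_features_law_clipped_entries)

context
  fixes lam :: real and d c :: nat
  assumes lam_pos: "0 < lam" and lam_less_1: "lam < 1"
begin

lemma integral_Dtr_margin:
  assumes "l \<in> {1..d}"
  shows "(\<integral>w. eps - clipped_entry d w (d+1) * clipped_entry d w l \<partial>Dtr d lam c) = - robust_margin d lam eps c l"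
proof -
  interpret prob_space "Dtr d lam c"
    by (rule prob_space_Dtr[OF lam_pos])
  have "integrable (Dtr d lam c) (\<lambda>w. clipped_entry d w (d+1) * clipped_entry d w l)"
    using assms by (intro integrable_Dtr_bounded[OF lam_pos, where B = 1] abs_clipped_entry_mult_le) auto
  then have "(\<integral>w. eps - clipped_entry d w (d+1) * clipped_entry d w l \<partial>Dtr d lam c)
      = eps - second_moment d lam c (d+1) l"
    using assms by (simp add: prob_space integral_Dtr_clipped_entries[OF lam_pos lam_less_1])
  then show ?thesis
    using assms by (simp add: second_moment_def signed_mean_def robust_margin_def)
qed

lemma integral_Dtr_bilinear:
  "(\<integral>w. (\<Sum>i\<in>{1..d+1}. p i * clipped_entry d w i) * (\<Sum>m\<in>{1..d+1}. q m * clipped_entry d w m) \<partial>Dtr d lam c)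
     = (\<Sum>m\<in>{1..d+1}. q m * (\<Sum>i\<in>{1..d+1}. p i * second_moment d lam c i m))"
proof -
  have int: "integrable (Dtr d lam c) (\<lambda>w. clipped_entry d w i * clipped_entry d w m)"
    if "i \<in> {1..d+1}" "m \<in> {1..d+1}" for i m
    using that by (intro integrable_Dtr_bounded[OF lam_pos, where B = 1] abs_clipped_entry_mult_le) auto
  have "(\<integral>w. (\<Sum>i\<in>{1..d+1}. p i * clipped_entry d w i) * (\<Sum>m\<in>{1..d+1}. q m * clipped_entry d w m) \<partial>Dtr d lam c)
      = (\<integral>w. (\<Sum>i\<in>{1..d+1}. \<Sum>m\<in>{1..d+1}. (p i * q m) * (clipped_entry d w i * clipped_entry d w m)) \<partial>Dtr d lam c)"
    unfolding sum_product by (simp only: mult_ac)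
  also have "\<dots> = (\<Sum>i\<in>{1..d+1}. \<Sum>m\<in>{1..d+1}. (p i * q m) * (\<integral>w. clipped_entry d w i * clipped_entry d w m \<partial>Dtr d lam c))"
  proof -
    have "(\<integral>w. (\<Sum>i\<in>{1..d+1}. \<Sum>m\<in>{1..d+1}. (p i * q m) * (clipped_entry d w i * clipped_entry d w m)) \<partial>Dtr d lam c)
        = (\<Sum>i\<in>{1..d+1}. (\<integral>w. (\<Sum>m\<in>{1..d+1}. (p i * q m) * (clipped_entry d w i * clipped_entry d w m)) \<partial>Dtr d lam c))"
      using int by (intro Bochner_Integration.integral_sum Bochner_Integration.integrable_sum integrable_mult_right)
    also have "\<dots> = (\<Sum>i\<in>{1..d+1}. \<Sum>m\<in>{1..d+1}. (p i * q m) * (\<integral>w. clipped_entry d w i * clipped_entry d w m \<partial>Dtr d lam c))"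
      using int by (intro sum.cong refl) (simp only: Bochner_Integration.integral_sum integrable_mult_right integral_mult_right_zero)
    finally show ?thesis .
  qed
  also have "\<dots> = (\<Sum>i\<in>{1..d+1}. \<Sum>m\<in>{1..d+1}. q m * (p i * second_moment d lam c i m))"
    by (intro sum.cong refl) (simp add: integral_Dtr_clipped_entries[OF lam_pos lam_less_1])
  also have "\<dots> = (\<Sum>m\<in>{1..d+1}. q m * (\<Sum>i\<in>{1..d+1}. p i * second_moment d lam c i m))"
    unfolding sum_distrib_left by (rule sum.swap)
  finally show ?thesis .
qed

end

section \<open>The transformer output and the adversary\<close>

definition query_weight :: "nat \<Rightarrow> nat \<Rightarrow> (nat \<Rightarrow> nat \<Rightarrow> real) \<Rightarrow> (nat \<Rightarrow> nat \<Rightarrow> real)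
    \<Rightarrow> ((nat \<Rightarrow> real) \<times> real \<Rightarrow> nat \<Rightarrow> real) \<Rightarrow> (nat \<Rightarrow> (nat \<Rightarrow> real) \<times> real) \<Rightarrow> nat \<Rightarrow> real" where
  "query_weight d N P Q z S l =
     (1 / real N) * (\<Sum>n\<in>{1..N}. (\<Sum>i\<in>{1..d+1}. P (d+1) i * z (S n) i) * (\<Sum>m\<in>{1..d+1}. Q m l * z (S n) m))"

lemma Zmat_demonstration: "n \<le> N \<Longrightarrow> Zmat d N S \<Delta> k n = entry d (S n) k"
  by (simp add: Zmat_def entry_def)

lemma masked_gram_Zmat:
  "mmul (N+1) (mmul (N+1) A (Mmask N)) (transp_mat (Zmat d N S \<Delta>)) r m = (\<Sum>n\<in>{1..N}. A r n * entry d (S n) m)"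
proof -
  have masked: "mmul (Suc N) A (Mmask N) r n = (if n \<le> N then A r n else 0)" if "n \<in> {1..N+1}" for n
  proof -
    have "mmul (Suc N) A (Mmask N) r n = (\<Sum>n'\<in>{1..N+1}. if n' = n then (if n \<le> N then A r n else 0) else 0)"
      unfolding mmul_def by (intro sum.cong) (auto simp: Mmask_def)
    then show ?thesis
      using that by simp
  qed
  have "{1..N+1} = insert (N+1) {1..N}" by auto
  then have "mmul (N+1) (mmul (N+1) A (Mmask N)) (transp_mat (Zmat d N S \<Delta>)) r m
      = (\<Sum>n\<in>{1..N}. mmul (N+1) A (Mmask N) r n * Zmat d N S \<Delta> m n)"
    unfolding mmul_def[of "N+1" "mmul (N+1) A (Mmask N)"] transp_mat_def using masked[of "N+1"] by simp
  also have "\<dots> = (\<Sum>n\<in>{1..N}. A r n * entry d (S n) m)"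
    by (intro sum.cong) (auto simp: masked Zmat_demonstration)
  finally show ?thesis .
qed

lemma tf_query_entry:
  "tf d N P Q (Zmat d N S \<Delta>) (d+1) (N+1) =
     (\<Sum>l\<in>{1..d}. query_weight d N P Q (entry d) S l * (fst (S (N+1)) l + \<Delta> l))"
proof -
  define Z where "Z = Zmat d N S \<Delta>"
  define A where "A = mmul (d+1) P Z"
  have A_entry: "A r n = (\<Sum>i\<in>{1..d+1}. P r i * entry d (S n) i)" if "n \<le> N" for r n
    unfolding A_def mmul_def Z_def using that by (simp add: Zmat_demonstration)
  have weight: "mmul (d+1) (mmul (N+1) (mmul (N+1) A (Mmask N)) (transp_mat Z)) Q (d+1) l
      = real N * query_weight d N P Q (entry d) S l" for l
  proof -
    have "mmul (d+1) (mmul (N+1) (mmul (N+1) A (Mmask N)) (transp_mat Z)) Q (d+1) l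
        = (\<Sum>m\<in>{1..d+1}. \<Sum>n\<in>{1..N}. A (d+1) n * (Q m l * entry d (S n) m))"
      unfolding mmul_def[of "d+1"] Z_def masked_gram_Zmat sum_distrib_right by (intro sum.cong refl) (simp add: mult_ac)
    also have "\<dots> = (\<Sum>n\<in>{1..N}. A (d+1) n * (\<Sum>m\<in>{1..d+1}. Q m l * entry d (S n) m))"
      unfolding sum_distrib_left by (rule sum.swap)
    finally show ?thesis
      by (cases "N = 0") (simp_all add: query_weight_def A_entry)
  qed
  have "{1..d+1} = insert (d+1) {1..d}" by auto
  then have "tf d N P Q Z (d+1) (N+1) = (1 / real N) *
      (\<Sum>l\<in>{1..d}. mmul (d+1) (mmul (N+1) (mmul (N+1) A (Mmask N)) (transp_mat Z)) Q (d+1) l * Z l (N+1))"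
    unfolding tf_def A_def[symmetric] unfolding mmul_def[of "d+1" _ Z] by (simp add: Z_def Zmat_def)
  also have "\<dots> = (1 / real N) * (\<Sum>l\<in>{1..d}. real N * query_weight d N P Q (entry d) S l * (fst (S (N+1)) l + \<Delta> l))"
    unfolding weight by (intro arg_cong[where f = "(*) _"] sum.cong refl) (simp add: Z_def Zmat_def)
  also have "\<dots> = (\<Sum>l\<in>{1..d}. query_weight d N P Q (entry d) S l * (fst (S (N+1)) l + \<Delta> l))"
    by (cases "N = 0") (simp_all add: sum_distrib_left query_weight_def[of d 0])
  finally show ?thesis
    unfolding Z_def .
qed

lemma SUP_linear_over_box:
  fixes a :: "'i \<Rightarrow> real"
  assumes "0 \<le> eps"
  shows "(SUP \<Delta>\<in>{\<Delta>. \<forall>i\<in>I. \<bar>\<Delta> i\<bar> \<le> eps}. C + (\<Sum>l\<in>I. a l * \<Delta> l)) = C + eps * (\<Sum>l\<in>I. \<bar>a l\<bar>)"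
proof (rule cSup_eq_maximum)
  let ?\<Delta> = "\<lambda>l. eps * sgn (a l)"
  have "\<bar>?\<Delta> i\<bar> \<le> eps" for i
    using assms by (simp add: abs_mult abs_sgn_eq)
  moreover have "a l * sgn (a l) = \<bar>a l\<bar>" for l
    by (cases "a l" "0::real" rule: linorder_cases) auto
  then have "C + (\<Sum>l\<in>I. a l * ?\<Delta> l) = C + eps * (\<Sum>l\<in>I. \<bar>a l\<bar>)"
    by (simp add: sum_distrib_left mult.left_commute)
  ultimately show "C + eps * (\<Sum>l\<in>I. \<bar>a l\<bar>) \<in> (\<lambda>\<Delta>. C + (\<Sum>l\<in>I. a l * \<Delta> l)) ` {\<Delta>. \<forall>i\<in>I. \<bar>\<Delta> i\<bar> \<le> eps}"
    by (intro image_eqI[where x = ?\<Delta>]) auto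
next
  fix z
  assume "z \<in> (\<lambda>\<Delta>. C + (\<Sum>l\<in>I. a l * \<Delta> l)) ` {\<Delta>. \<forall>i\<in>I. \<bar>\<Delta> i\<bar> \<le> eps}"
  then obtain \<Delta> where \<Delta>: "\<forall>i\<in>I. \<bar>\<Delta> i\<bar> \<le> eps" and z: "z = C + (\<Sum>l\<in>I. a l * \<Delta> l)"
    by auto
  have "a l * \<Delta> l \<le> eps * \<bar>a l\<bar>" if "l \<in> I" for l
  proof -
    have "a l * \<Delta> l \<le> \<bar>a l\<bar> * \<bar>\<Delta> l\<bar>"
      by (metis abs_ge_self abs_mult)
    also have "\<dots> \<le> \<bar>a l\<bar> * eps"
      using \<Delta> that by (intro mult_left_mono) auto
    finally show ?thesis
      by (simp add: mult.commute)
  qed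
  then show "z \<le> C + eps * (\<Sum>l\<in>I. \<bar>a l\<bar>)"
    unfolding z sum_distrib_left by (simp add: sum_mono)
qed

lemma adv_loss_eq:
  assumes "0 \<le> eps"
  shows "adv_loss d N eps P Q S =
    - snd (S (N+1)) * (\<Sum>l\<in>{1..d}. query_weight d N P Q (entry d) S l * fst (S (N+1)) l)
    + eps * (\<Sum>l\<in>{1..d}. \<bar>snd (S (N+1)) * query_weight d N P Q (entry d) S l\<bar>)"
proof -
  have "adv_loss d N eps P Q S = (SUP \<Delta>\<in>{\<Delta>. \<forall>i\<in>{1..d}. \<bar>\<Delta> i\<bar> \<le> eps}.
      - snd (S (N+1)) * (\<Sum>l\<in>{1..d}. query_weight d N P Q (entry d) S l * fst (S (N+1)) l)
      + (\<Sum>l\<in>{1..d}. (- snd (S (N+1)) * query_weight d N P Q (entry d) S l) * \<Delta> l))"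
    unfolding adv_loss_def tf_query_entry
    by (intro SUP_cong refl) (simp add: sum.distrib[symmetric] sum_distrib_left algebra_simps)
  also have "\<dots> = - snd (S (N+1)) * (\<Sum>l\<in>{1..d}. query_weight d N P Q (entry d) S l * fst (S (N+1)) l)
    + eps * (\<Sum>l\<in>{1..d}. \<bar>- snd (S (N+1)) * query_weight d N P Q (entry d) S l\<bar>)"
    by (rule SUP_linear_over_box[OF assms])
  finally show ?thesis
    by simp
qed

lemma query_weight_nonneg:
  assumes typical: "\<forall>n\<in>{1..N}. typical d (S n)" and "in01 d P" "in01 d Q" "l \<in> {1..d}"
  shows "0 \<le> query_weight d N P Q (entry d) S l"
proof -
  have pos: "0 \<le> (\<Sum>i\<in>{1..d+1}. P (d+1) i * entry d (S n) i) * (\<Sum>m\<in>{1..d+1}. Q m l * entry d (S n) m)"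
    if n: "n \<in> {1..N}" for n
  proof -
    define y where "y = snd (S n)"
    have "typical d (S n)"
      using typical n by auto
    then have y: "y \<in> {-1, 1}" and features: "\<forall>i\<in>{1..d}. 0 \<le> y * fst (S n) i"
      unfolding typical_def y_def by auto
    then have yy: "y * y = 1"
      by auto
    have aligned: "0 \<le> y * entry d (S n) i" if "i \<in> {1..d+1}" for i
      using that features yy by (cases "i \<le> d") (auto simp: entry_def y_def)
    have weighted: "0 \<le> y * (\<Sum>i\<in>{1..d+1}. w i * entry d (S n) i)" if "\<forall>i\<in>{1..d+1}. 0 \<le> w i" for w
      unfolding sum_distrib_left
    proof (rule sum_nonneg)
      fix i
      assume i: "i \<in> {1..d+1}"
      then have "0 \<le> w i * (y * entry d (S n) i)"
        using that i aligned[OF i] by simp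
      then show "0 \<le> y * (w i * entry d (S n) i)"
        by (simp add: mult.left_commute)
    qed
    let ?A = "\<Sum>i\<in>{1..d+1}. P (d+1) i * entry d (S n) i" and ?B = "\<Sum>m\<in>{1..d+1}. Q m l * entry d (S n) m"
    have "0 \<le> y * ?A"
      using assms(2) by (intro weighted) (simp add: in01_def)
    moreover have "0 \<le> y * ?B"
      using assms(3,4) by (intro weighted) (simp add: in01_def)
    moreover have "?A * ?B = (y * ?A) * (y * ?B)"
      by (simp add: ac_simps yy)
    ultimately show "0 \<le> ?A * ?B"
      by (simp only: mult_nonneg_nonneg)
  qed
  show ?thesis
    unfolding query_weight_def by (intro mult_nonneg_nonneg sum_nonneg pos) simp_all
qed

definition robust_loss :: "nat \<Rightarrow> nat \<Rightarrow> real \<Rightarrow> (nat \<Rightarrow> nat \<Rightarrow> real) \<Rightarrow> (nat \<Rightarrow> nat \<Rightarrow> real)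
    \<Rightarrow> (nat \<Rightarrow> (nat \<Rightarrow> real) \<times> real) \<Rightarrow> real" where
  "robust_loss d N eps P Q S = (\<Sum>l\<in>{1..d}.
     (eps - clipped_entry d (S (N+1)) (d+1) * clipped_entry d (S (N+1)) l) * query_weight d N P Q (clipped_entry d) S l)"

lemma clipped_entry_typical:
  "typical d w \<Longrightarrow> i \<in> {1..d+1} \<Longrightarrow> clipped_entry d w i = entry d w i"
  unfolding typical_def clipped_entry_def entry_def by (auto intro: clip_eq)

text \<open>On typical samples the query weights are nonnegative, so the worst perturbation is
  -eps y in every coordinate.\<close>

lemma adv_loss_eq_robust_loss:
  assumes "0 \<le> eps" and typical: "\<forall>n\<in>{1..N+1}. typical d (S n)" and PQ: "in01 d P" "in01 d Q"
  shows "adv_loss d N eps P Q S = robust_loss d N eps P Q S"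
proof -
  define y where "y = snd (S (N+1))"
  have "typical d (S (N+1))"
    using typical by auto
  then have y: "\<bar>y\<bar> = 1" "clipped_entry d (S (N+1)) (d+1) = y"
    using clipped_entry_typical[of d "S (N+1)" "d+1"] unfolding typical_def y_def entry_def by auto
  have "query_weight d N P Q (clipped_entry d) S l = query_weight d N P Q (entry d) S l" for l
    unfolding query_weight_def using typical by (auto intro!: sum.cong simp: clipped_entry_typical)
  moreover have "clipped_entry d (S (N+1)) l = fst (S (N+1)) l" if "l \<in> {1..d}" for l
    using typical that clipped_entry_typical[of d "S (N+1)" l] by (simp add: entry_def)
  moreover have "0 \<le> query_weight d N P Q (entry d) S l" if "l \<in> {1..d}" for l
    using typical PQ that by (intro query_weight_nonneg) auto
  ultimately show ?thesis
    unfolding adv_loss_eq[OF assms(1)] robust_loss_def y_def[symmetric] y(2)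
    by (simp add: abs_mult y(1) sum_distrib_left sum.distrib[symmetric] algebra_simps)
qed

section \<open>The expected adversarial loss\<close>

context
  fixes lam :: real and d N c :: nat
  assumes lam_pos: "0 < lam"
begin

lemma measurable_sample_component:
  assumes "f \<in> borel_measurable (sample_borel d)" "n \<in> {1..N+1}"
  shows "(\<lambda>S. f (S n)) \<in> borel_measurable (PiM {1..N+1} (\<lambda>_. Dtr d lam c))"
proof -
  have "f \<in> borel_measurable (Dtr d lam c)"
    unfolding measurable_cong_sets[OF sets_Dtr[OF lam_pos] refl] by (rule assms(1))
  then show ?thesis
    by (intro measurable_compose[OF measurable_component_singleton[OF assms(2)]])
qed

lemma measurable_query_weight:
  assumes "\<And>n i. n \<in> {1..N} \<Longrightarrow> i \<in> {1..d+1} \<Longrightarrow> (\<lambda>S. z (S n) i) \<in> borel_measurable (PiM {1..N+1} (\<lambda>_. Dtr d lam c))"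
  shows "(\<lambda>S. query_weight d N P Q z S l) \<in> borel_measurable (PiM {1..N+1} (\<lambda>_. Dtr d lam c))"
  unfolding query_weight_def using assms by measurable

lemma measurable_adv_loss:
  assumes "0 \<le> eps"
  shows "adv_loss d N eps P Q \<in> borel_measurable (PiM {1..N+1} (\<lambda>_. Dtr d lam c))"
proof -
  have "(\<lambda>S. entry d (S n) i) \<in> borel_measurable (PiM {1..N+1} (\<lambda>_. Dtr d lam c))"
    if "n \<in> {1..N+1}" "i \<in> {1..d+1}" for n i
    using that by (intro measurable_sample_component measurable_entry)
  moreover have "(\<lambda>S. snd (S (N+1))) \<in> borel_measurable (PiM {1..N+1} (\<lambda>_. Dtr d lam c))"
    by (intro measurable_sample_component) (auto simp: sample_borel_def)
  moreover have "(\<lambda>S. fst (S (N+1)) l) \<in> borel_measurable (PiM {1..N+1} (\<lambda>_. Dtr d lam c))" if "l \<in> {1..d}" for l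
    using that by (intro measurable_sample_component) (auto simp: sample_borel_def)
  ultimately show ?thesis
    unfolding adv_loss_eq[OF assms, abs_def]
    by (intro borel_measurable_add borel_measurable_times borel_measurable_sum borel_measurable_abs
        borel_measurable_uminus borel_measurable_const measurable_query_weight) auto
qed

lemma measurable_robust_loss: "robust_loss d N eps P Q \<in> borel_measurable (PiM {1..N+1} (\<lambda>_. Dtr d lam c))"
proof -
  have "(\<lambda>S. clipped_entry d (S n) i) \<in> borel_measurable (PiM {1..N+1} (\<lambda>_. Dtr d lam c))"
    if "n \<in> {1..N+1}" "i \<in> {1..d+1}" for n i
    using that by (intro measurable_sample_component measurable_clipped_entry)
  then show ?thesis
    unfolding robust_loss_def
    by (intro borel_measurable_times borel_measurable_sum borel_measurable_diff borel_measurable_const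
        measurable_query_weight) auto
qed

end

context
  fixes lam :: real and d N c :: nat
  assumes lam_pos: "0 < lam" and lam_less_1: "lam < 1"
begin

lemma AE_typical_samples: "AE S in PiM {1..N+1} (\<lambda>_. Dtr d lam c). \<forall>n\<in>{1..N+1}. typical d (S n)"
  by (intro AE_finite_allI AE_PiM_component[where P = "typical d"] prob_space_Dtr[OF lam_pos]
      AE_typical[OF lam_pos lam_less_1]) auto

lemma
  fixes eps :: real and p q :: "nat \<Rightarrow> real"
  assumes l: "l \<in> {1..d}" and n: "n \<in> {1..N}"
  defines "margin \<equiv> \<lambda>w. eps - clipped_entry d w (d+1) * clipped_entry d w l"
    and "gram \<equiv> \<lambda>w. (\<Sum>i\<in>{1..d+1}. p i * clipped_entry d w i) * (\<Sum>m\<in>{1..d+1}. q m * clipped_entry d w m)"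
  shows integrable_query_margin_gram:
      "integrable (PiM {1..N+1} (\<lambda>_. Dtr d lam c)) (\<lambda>S. margin (S (N+1)) * gram (S n))"
    and integral_query_margin_gram:
      "integral\<^sup>L (PiM {1..N+1} (\<lambda>_. Dtr d lam c)) (\<lambda>S. margin (S (N+1)) * gram (S n)) =
         - robust_margin d lam eps c l * (\<Sum>m\<in>{1..d+1}. q m * (\<Sum>i\<in>{1..d+1}. p i * second_moment d lam c i m))"
proof -
  have components: "finite {1..N+1}" "N+1 \<in> {1..N+1}" "n \<in> {1..N+1}" "N+1 \<noteq> n"
    using n by auto
  have margin: "integrable (Dtr d lam c) margin"
    unfolding margin_def by (rule integrable_Dtr_margin[OF lam_pos l])
  have gram: "integrable (Dtr d lam c) gram"
    unfolding gram_def by (rule integrable_Dtr_bilinear[OF lam_pos])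
  show "integrable (PiM {1..N+1} (\<lambda>_. Dtr d lam c)) (\<lambda>S. margin (S (N+1)) * gram (S n))"
    by (rule integrable_PiM_two_components[OF components prob_space_Dtr[OF lam_pos] margin gram])
  have "integral\<^sup>L (PiM {1..N+1} (\<lambda>_. Dtr d lam c)) (\<lambda>S. margin (S (N+1)) * gram (S n))
      = integral\<^sup>L (Dtr d lam c) margin * integral\<^sup>L (Dtr d lam c) gram"
    by (rule integral_PiM_two_components[OF components prob_space_Dtr[OF lam_pos] margin gram])
  also have "integral\<^sup>L (Dtr d lam c) margin = - robust_margin d lam eps c l"
    unfolding margin_def by (rule integral_Dtr_margin[OF lam_pos lam_less_1 l])
  also have "integral\<^sup>L (Dtr d lam c) gram = (\<Sum>m\<in>{1..d+1}. q m * (\<Sum>i\<in>{1..d+1}. p i * second_moment d lam c i m))"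
    unfolding gram_def by (rule integral_Dtr_bilinear[OF lam_pos lam_less_1])
  finally show "integral\<^sup>L (PiM {1..N+1} (\<lambda>_. Dtr d lam c)) (\<lambda>S. margin (S (N+1)) * gram (S n)) =
      - robust_margin d lam eps c l * (\<Sum>m\<in>{1..d+1}. q m * (\<Sum>i\<in>{1..d+1}. p i * second_moment d lam c i m))" .
qed

lemma integral_robust_loss:
  assumes "N \<ge> 1"
  shows "integral\<^sup>L (PiM {1..N+1} (\<lambda>_. Dtr d lam c)) (robust_loss d N eps P Q) =
    - (\<Sum>l\<in>{1..d}. robust_margin d lam eps c l *
         (\<Sum>m\<in>{1..d+1}. Q m l * (\<Sum>i\<in>{1..d+1}. P (d+1) i * second_moment d lam c i m)))"
proof -
  let ?M = "PiM {1..N+1} (\<lambda>_. Dtr d lam c)"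
  define margin where "margin l = (\<lambda>w. eps - clipped_entry d w (d+1) * clipped_entry d w l)" for l
  define gram where "gram l = (\<lambda>w. (\<Sum>i\<in>{1..d+1}. P (d+1) i * clipped_entry d w i)
    * (\<Sum>m\<in>{1..d+1}. Q m l * clipped_entry d w m))" for l
  have summand: "integrable ?M (\<lambda>S. margin l (S (N+1)) * gram l (S n))"
    "integral\<^sup>L ?M (\<lambda>S. margin l (S (N+1)) * gram l (S n)) =
       - robust_margin d lam eps c l * (\<Sum>m\<in>{1..d+1}. Q m l * (\<Sum>i\<in>{1..d+1}. P (d+1) i * second_moment d lam c i m))"
    if "l \<in> {1..d}" "n \<in> {1..N}" for l n
    unfolding margin_def gram_def using that
    by (rule integrable_query_margin_gram integral_query_margin_gram)+
  have expand: "robust_loss d N eps P Q =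
      (\<lambda>S. \<Sum>l\<in>{1..d}. (1 / real N) * (\<Sum>n\<in>{1..N}. margin l (S (N+1)) * gram l (S n)))"
    unfolding robust_loss_def query_weight_def margin_def gram_def
    by (intro ext sum.cong refl) (simp only: sum_distrib_left mult_ac)
  have "integral\<^sup>L ?M (robust_loss d N eps P Q) =
      (\<Sum>l\<in>{1..d}. integral\<^sup>L ?M (\<lambda>S. (1 / real N) * (\<Sum>n\<in>{1..N}. margin l (S (N+1)) * gram l (S n))))"
    unfolding expand using summand(1)
    by (intro Bochner_Integration.integral_sum integrable_mult_right Bochner_Integration.integrable_sum)
  also have "\<dots> = (\<Sum>l\<in>{1..d}. (1 / real N) * (\<Sum>n\<in>{1..N}. integral\<^sup>L ?M (\<lambda>S. margin l (S (N+1)) * gram l (S n))))"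
    using summand(1) by (intro sum.cong refl) (simp only: integral_mult_right_zero Bochner_Integration.integral_sum)
  also have "\<dots> = (\<Sum>l\<in>{1..d}. - robust_margin d lam eps c l *
      (\<Sum>m\<in>{1..d+1}. Q m l * (\<Sum>i\<in>{1..d+1}. P (d+1) i * second_moment d lam c i m)))"
  proof (intro sum.cong refl)
    fix l
    assume l: "l \<in> {1..d}"
    have "(\<Sum>n\<in>{1..N}. integral\<^sup>L ?M (\<lambda>S. margin l (S (N+1)) * gram l (S n)))
        = (\<Sum>n\<in>{1..N}. - robust_margin d lam eps c l *
            (\<Sum>m\<in>{1..d+1}. Q m l * (\<Sum>i\<in>{1..d+1}. P (d+1) i * second_moment d lam c i m)))"
      by (rule sum.cong[OF refl summand(2)[OF l]])
    then show "(1 / real N) * (\<Sum>n\<in>{1..N}. integral\<^sup>L ?M (\<lambda>S. margin l (S (N+1)) * gram l (S n)))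
        = - robust_margin d lam eps c l * (\<Sum>m\<in>{1..d+1}. Q m l * (\<Sum>i\<in>{1..d+1}. P (d+1) i * second_moment d lam c i m))"
      using assms by simp
  qed
  finally show ?thesis
    by (simp only: sum_negf mult_minus_left)
qed

end

lemma pretrain_obj_eq_expected_loss:
  assumes "d \<ge> 1" "N \<ge> 1" "0 < lam" "lam < 1" "0 \<le> eps" and PQ: "in01 d P" "in01 d Q"
  shows "pretrain_obj d N lam eps P Q = expected_loss d lam eps P Q"
proof -
  let ?summand = "\<lambda>c l m i. Q m l * (P (d+1) i * (robust_margin d lam eps c l * second_moment d lam c i m))"
  have per_class: "integral\<^sup>L (PiM {1..N+1} (\<lambda>_. Dtr d lam c)) (adv_loss d N eps P Q) =
      - (\<Sum>l\<in>{1..d}. \<Sum>m\<in>{1..d+1}. \<Sum>i\<in>{1..d+1}. ?summand c l m i)" for c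
  proof -
    have "integral\<^sup>L (PiM {1..N+1} (\<lambda>_. Dtr d lam c)) (adv_loss d N eps P Q)
        = integral\<^sup>L (PiM {1..N+1} (\<lambda>_. Dtr d lam c)) (robust_loss d N eps P Q)"
    proof (intro integral_cong_AE measurable_adv_loss measurable_robust_loss assms(3-5))
      show "AE S in PiM {1..N+1} (\<lambda>_. Dtr d lam c). adv_loss d N eps P Q S = robust_loss d N eps P Q S"
        using AE_typical_samples[OF assms(3,4), where N = N]
        by eventually_elim (rule adv_loss_eq_robust_loss[OF assms(5) _ PQ])
    qed
    also have "\<dots> = - (\<Sum>l\<in>{1..d}. \<Sum>m\<in>{1..d+1}. \<Sum>i\<in>{1..d+1}. ?summand c l m i)"
      unfolding integral_robust_loss[OF assms(3,4) assms(2)] sum_distrib_left by (simp only: mult_ac)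
    finally show ?thesis .
  qed
  have "pretrain_obj d N lam eps P Q =
      (\<Sum>c\<in>{1..d}. integral\<^sup>L (PiM {1..N+1} (\<lambda>_. Dtr d lam c)) (adv_loss d N eps P Q)) / real d"
    unfolding pretrain_obj_def using assms(1) by (subst integral_pmf_of_set) auto
  also have "\<dots> = (\<Sum>c\<in>{1..d}. - (\<Sum>l\<in>{1..d}. \<Sum>m\<in>{1..d+1}. \<Sum>i\<in>{1..d+1}. ?summand c l m i)) / real d"
    by (intro arg_cong[where f = "\<lambda>x. x / real d"] sum.cong refl per_class)
  also have "\<dots> = - (\<Sum>c\<in>{1..d}. \<Sum>l\<in>{1..d}. \<Sum>m\<in>{1..d+1}. \<Sum>i\<in>{1..d+1}. ?summand c l m i) / real d"
    by (simp only: sum_negf)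
  also have "(\<Sum>c\<in>{1..d}. \<Sum>l\<in>{1..d}. \<Sum>m\<in>{1..d+1}. \<Sum>i\<in>{1..d+1}. ?summand c l m i)
      = (\<Sum>l\<in>{1..d}. \<Sum>c\<in>{1..d}. \<Sum>m\<in>{1..d+1}. \<Sum>i\<in>{1..d+1}. ?summand c l m i)"
    by (rule sum.swap)
  also have "\<dots> = (\<Sum>l\<in>{1..d}. \<Sum>m\<in>{1..d+1}. \<Sum>c\<in>{1..d}. \<Sum>i\<in>{1..d+1}. ?summand c l m i)"
    by (intro sum.cong refl sum.swap)
  also have "\<dots> = (\<Sum>l\<in>{1..d}. \<Sum>m\<in>{1..d+1}. \<Sum>i\<in>{1..d+1}. \<Sum>c\<in>{1..d}. ?summand c l m i)"
    by (intro sum.cong refl sum.swap)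
  also have "\<dots> = (\<Sum>l\<in>{1..d}. \<Sum>m\<in>{1..d+1}. Q m l * row_coeff d lam eps (P (d+1)) m l)"
    unfolding row_coeff_def loss_coeff_def sum_distrib_left ..
  finally show ?thesis
    unfolding expected_loss_def .
qed

theorem lemmaD1:
  fixes d N d' b :: nat and lam eps :: real
  assumes "d \<ge> 1" and "N \<ge> 1"
    and "0 < lam" and "lam < 1" and "0 \<le> eps" and "eps < 1"
    and "d' \<le> d" and "b \<le> 1"
    and "\<forall>d''\<le>d. \<forall>b''\<le>1. score d lam eps d'' b'' \<le> score d lam eps d' b"
  shows "in01 d (Pmat d d' b) \<and> in01 d (Qmat d lam eps d' b) \<and>
    (\<forall>P' Q'. in01 d P' \<and> in01 d Q' \<longrightarrow>
       pretrain_obj d N lam eps (Pmat d d' b) (Qmat d lam eps d' b) \<le> pretrain_obj d N lam eps P' Q')"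
proof (intro conjI allI impI)
  show P: "in01 d (Pmat d d' b)"
    using assms(8) unfolding in01_def Pmat_def by auto
  show Q: "in01 d (Qmat d lam eps d' b)"
    unfolding in01_def Qmat_def Amat_def by auto
  fix P' Q'
  assume "in01 d P' \<and> in01 d Q'"
  then have P'Q': "in01 d P'" "in01 d Q'"
    by auto
  have "pretrain_obj d N lam eps (Pmat d d' b) (Qmat d lam eps d' b) = - score d lam eps d' b / real d"
    using assms P Q by (simp add: pretrain_obj_eq_expected_loss expected_loss_Pmat_Qmat)
  also have "\<dots> \<le> expected_loss d lam eps P' Q'"
    using P'Q' assms(9) by (rule expected_loss_lower_bound)
  also have "\<dots> = pretrain_obj d N lam eps P' Q'"
    using assms P'Q' by (simp add: pretrain_obj_eq_expected_loss)
  finally show "pretrain_obj d N lam eps (Pmat d d' b) (Qmat d lam eps d' b) \<le> pretrain_obj d N lam eps P' Q'" .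
qed

end
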